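(* Let $\{x_i,v_i\}_{i\in[N]}$ be the global solution of the delayed Cucker–Smale system described in the context, and let $\beta>0$ satisfy $2\beta e^{-2\tau}-4\tau-\beta\ge0$. Define \[ G(t):=d_v(t)+\beta\int_{\max\{0,t-2\tau\}}^t e^{-(t-s)}\int_s^t\max_{i\in[N]}|\dot v_i(r)|\,\mathrm dr\,\mathrm ds,\qquad t\ge0. \] Then for almost all $t>2\tau$, \[ \frac{\mathrm d}{\mathrm dt}G(t)\le4\int_{t-\tau}^tG(s-\tau)\,\mathrm ds-(N-1)\underline a(t)G(t)+\beta(1-e^{-2\tau})G(t-\tau), \] where $\underline a(t):=\min_{i,j\in[N]}a_{ij}(t)$.
   Context: Let $N\ge2$, $d\ge1$ be integers, $[N]=\{1,\dots,N\}$, $0\le\sigma\le\tau$. Let $\psi:[0,\infty)\to[0,\infty)$ be continuous, nonincreasing, positive everywhere, with $\sup\psi\le1$. Given $x_i^0\in C^1([-\tau,0],\mathbb{R}^d)$, $v_i^0\in C([-\tau,0],\mathbb{R}^d)$ with $\frac{\mathrm d}{\mathrm dt}x_i^0=v_i^0$, $\{x_i,v_i\}$ is the global solution of $\dot x_i(t)=v_i(t)$, $\dot v_i(t)=\sum_{j\ne i}a_{ij}(t)(v_j(t-\tau)-v_i(t-\sigma))$ for $t>0$, with $a_{ij}(t)=\frac1{N-1}\psi(|x_i(t-\sigma)-x_j(t-\tau)|)$ for all $i,j\in[N]$, and $x_i=x_i^0$, $v_i=v_i^0$ on $[-\tau,0]$ ($v_i$ continuously differentiable on $[0,\infty)$).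 $d_v(t):=\max_{i,j}|v_i(t)-v_j(t)|$. *)

theory Defs
  imports "HOL-Analysis.Analysis"
begin

definition cs_a :: "(real \<Rightarrow> real) \<Rightarrow> nat \<Rightarrow> (nat \<Rightarrow> real \<Rightarrow> 'a::real_normed_vector)
    \<Rightarrow> real \<Rightarrow> real \<Rightarrow> nat \<Rightarrow> nat \<Rightarrow> real \<Rightarrow> real" where
  "cs_a \<psi> N x \<sigma> \<tau> i j t = \<psi> (norm (x i (t - \<sigma>) - x j (t - \<tau>))) / (real N - 1)"

definition d_v :: "nat \<Rightarrow> (nat \<Rightarrow> real \<Rightarrow> 'a::real_normed_vector) \<Rightarrow> real \<Rightarrow> real" where
  "d_v N v t = Max {norm (v i t - v j t) | i j. i \<in> {1..N} \<and> j \<in> {1..N}}"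

definition a_min :: "(real \<Rightarrow> real) \<Rightarrow> nat \<Rightarrow> (nat \<Rightarrow> real \<Rightarrow> 'a::real_normed_vector)
    \<Rightarrow> real \<Rightarrow> real \<Rightarrow> real \<Rightarrow> real" where
  "a_min \<psi> N x \<sigma> \<tau> t = Min {cs_a \<psi> N x \<sigma> \<tau> i j t | i j. i \<in> {1..N} \<and> j \<in> {1..N}}"

text \<open>The Lyapunov-type functional G(t), with dv i the derivative of v i on [0,oo).\<close>
definition G_fun :: "nat \<Rightarrow> (nat \<Rightarrow> real \<Rightarrow> 'a::real_normed_vector) \<Rightarrow> (nat \<Rightarrow> real \<Rightarrow> 'a)
    \<Rightarrow> real \<Rightarrow> real \<Rightarrow> real \<Rightarrow> real" where
  "G_fun N v dv \<beta> \<tau> t = d_v N v t + \<beta> *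
     integral {max 0 (t - 2 * \<tau>)..t}
       (\<lambda>s. exp (- (t - s)) * integral {s..t} (\<lambda>r. Max ((\<lambda>i. norm (dv i r)) ` {1..N})))"

end

theory Submission
  imports Defs
begin

text \<open>Off the isolated zeros of \<open>v i - v j\<close> and of \<open>|v i - v j| - |v k - v l|\<close>,
  a countable set, all maximal pairs have the same derivative, so \<open>d_v\<close> is differentiable
  almost everywhere. Let \<open>M = max\<^sub>k |v k'|\<close> and let \<open>F\<close> be its integral. Differentiating
  \<open>d_v\<close> along a maximal pair and inserting the equations of motion gives
  \<open>d_v' \<le> -(N - 1) a d_v + 4 (F t - F (t - \<tau>))\<close>, since replacing a delayed velocity by
  the current one costs at most \<open>F t - F (t - \<tau>)\<close>. The memory part of \<open>G\<close> is an explicit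
  combination of \<open>F\<close> and an antiderivative of \<open>exp s * F s\<close>; its derivative is
  \<open>(1 - exp (-2\<tau>)) M t - memory t - exp (-2\<tau>) (F t - F (t - 2\<tau>))\<close>. Bounding
  \<open>M r \<le> d_v (r - \<tau>) + F r - F (r - \<tau>)\<close> and \<open>d_v \<le> G\<close>, all terms in \<open>F t - F (t - 2\<tau>)\<close>
  collect into the factor \<open>4\<tau> + \<beta> - 2\<beta> exp (-2\<tau>)\<close>, which the hypothesis on \<open>\<beta>\<close> makes
  nonpositive.\<close>

section \<open>Maxima of finitely many differentiable functions\<close>

lemma countable_isolated_points:
  fixes S :: "'a::second_countable_topology set"
  shows "countable {x. x isolated_in S}"
proof -
  obtain \<B> :: "'a set set"
    where \<B>: "countable \<B>" "\<And>S. open S \<Longrightarrow> \<exists>U. U \<subseteq> \<B> \<and> S = \<Union>U"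
    by (metis univ_second_countable)
  have "\<forall>x\<in>{x. x isolated_in S}. \<exists>B. B \<in> \<B> \<and> B \<inter> S = {x}"
  proof
    fix x assume "x \<in> {x. x isolated_in S}"
    then obtain T where T: "x \<in> S" "open T" "T \<inter> S = {x}"
      by (auto elim: isolated_inE)
    obtain U where U: "U \<subseteq> \<B>" "T = \<Union>U"
      using \<B>(2)[OF T(2)] by blast
    have "x \<in> T"
      using T(3) by blast
    then obtain B where B: "B \<in> U" "x \<in> B"
      using U(2) by blast
    then have "B \<in> \<B>" "B \<subseteq> T"
      using U by auto
    moreover have "B \<inter> S = {x}"
      using T(1,3) B(2) \<open>B \<subseteq> T\<close> by blast
    ultimately show "\<exists>B. B \<in> \<B> \<and> B \<inter> S = {x}"
      by blast
  qed
  from bchoice[OF this] obtain g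
    where g: "\<forall>x\<in>{x. x isolated_in S}. g x \<in> \<B> \<and> g x \<inter> S = {x}" ..
  have inj: "inj_on g {x. x isolated_in S}"
  proof (rule inj_onI)
    fix x y assume "x \<in> {x. x isolated_in S}" "y \<in> {x. x isolated_in S}" "g x = g y"
    then have "{x} = {y}"
      using g by metis
    then show "x = y" by simp
  qed
  have "g ` {x. x isolated_in S} \<subseteq> \<B>"
    using g by blast
  then have "countable (g ` {x. x isolated_in S})"
    using \<B>(1) by (rule countable_subset)
  then show ?thesis
    using inj by (rule countable_image_inj_on)
qed

lemma isolated_zero_if_nonzero_derivative:
  fixes h :: "real \<Rightarrow> 'b::real_normed_vector"
  assumes "(h has_vector_derivative h') (at t)" "h t = 0" "h' \<noteq> 0"
  shows "t isolated_in {s. h s = 0}"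
proof -
  have "((\<lambda>s. norm (h s - h t - (s - t) *\<^sub>R h') / norm (s - t)) \<longlongrightarrow> 0) (at t)"
    using assms(1) unfolding has_vector_derivative_def has_derivative_iff_norm by blast
  then have "eventually (\<lambda>s. norm (h s - h t - (s - t) *\<^sub>R h') / norm (s - t) < norm h') (at t)"
    using assms(3) by (intro order_tendstoD(2)) auto
  moreover have "eventually (\<lambda>s. s \<noteq> t) (at t)"
    by (simp add: eventually_at_filter)
  ultimately have "eventually (\<lambda>s. h s \<noteq> 0) (at t)"
    by eventually_elim (use assms(2) in auto)
  then show ?thesis
    using assms(2) by (simp add: isolated_in_altdef)
qed

lemma sgn_inner_self: "sgn x \<bullet> x = norm (x :: 'a::real_inner)"
  by (cases "x = 0") (simp_all add: sgn_div_norm dot_square_norm power2_eq_square)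

lemma has_real_derivative_norm_at_zero:
  fixes w :: "real \<Rightarrow> 'b::real_normed_vector"
  assumes "(w has_vector_derivative 0) (at t)" "w t = 0"
  shows "((\<lambda>s. norm (w s)) has_real_derivative 0) (at t)"
  using assms unfolding has_field_derivative_def has_vector_derivative_def has_derivative_iff_norm
  by (simp add: bounded_linear_mult_right)

lemma has_real_derivative_norm:
  fixes w :: "real \<Rightarrow> 'b::real_inner"
  assumes "(w has_vector_derivative w') (at t)" "w t \<noteq> 0"
  shows "((\<lambda>s. norm (w s)) has_real_derivative w' \<bullet> sgn (w t)) (at t)"
proof -
  have "((\<lambda>s. norm (w s)) has_derivative (\<lambda>h. (h *\<^sub>R w') \<bullet> sgn (w t))) (at t)"
    using has_derivative_compose[OF assms(1)[unfolded has_vector_derivative_def]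
        has_derivative_norm[OF assms(2)]] by simp
  then show ?thesis
    unfolding has_field_derivative_def by (rule has_derivative_eq_rhs) (simp add: fun_eq_iff)
qed

lemma DERIV_max_same:
  assumes "(f has_real_derivative D) (at t)" "(g has_real_derivative D) (at t)" "f t = g t"
  shows "((\<lambda>s. max (f s) (g s)) has_real_derivative D) (at t)"
proof -
  have "((\<lambda>s. f s - g s) has_vector_derivative 0) (at t)"
    using DERIV_diff[OF assms(1,2)] by (simp add: has_real_derivative_iff_has_vector_derivative)
  then have "((\<lambda>s. \<bar>f s - g s\<bar>) has_real_derivative 0) (at t)"
    using has_real_derivative_norm_at_zero[of "\<lambda>s. f s - g s"] assms(3) by simp
  then have "((\<lambda>s. (f s + g s + \<bar>f s - g s\<bar>) / 2) has_real_derivative (D + D + 0) / 2) (at t)"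
    using assms(1,2) by (intro DERIV_cdivide DERIV_add)
  moreover have "(\<lambda>s. (f s + g s + \<bar>f s - g s\<bar>) / 2) = (\<lambda>s. max (f s) (g s))"
    by (auto simp: fun_eq_iff max_def)
  ultimately show ?thesis by simp
qed

lemma DERIV_Max_same:
  fixes f :: "'p \<Rightarrow> real \<Rightarrow> real"
  assumes "finite A" "A \<noteq> {}"
    and "\<And>p. p \<in> A \<Longrightarrow> f p t = c" "\<And>p. p \<in> A \<Longrightarrow> (f p has_real_derivative D) (at t)"
  shows "((\<lambda>s. Max ((\<lambda>p. f p s) ` A)) has_real_derivative D) (at t)"
  using assms
proof (induction A rule: finite_ne_induct)
  case (singleton p)
  then show ?case by simp
next
  case (insert p A)
  have "((\<lambda>s. max (f p s) (Max ((\<lambda>q. f q s) ` A))) has_real_derivative D) (at t)"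
    using insert by (intro DERIV_max_same) auto
  then show ?case
    using insert by simp
qed

lemma Max_image_eq_Max_subset:
  fixes f :: "'p \<Rightarrow> 'b::linorder"
  assumes "finite P" "A \<subseteq> P" "p0 \<in> A" "\<And>p. p \<in> P - A \<Longrightarrow> f p < f p0"
  shows "Max (f ` P) = Max (f ` A)"
proof (rule antisym)
  have "finite A"
    using assms(1,2) by (rule finite_subset[rotated])
  have "f p \<le> Max (f ` A)" if "p \<in> P" for p
  proof (cases "p \<in> A")
    case True
    then show ?thesis
      using \<open>finite A\<close> by (intro Max_ge) auto
  next
    case False
    then have "f p < f p0"
      using assms(4) that by blast
    also have "f p0 \<le> Max (f ` A)"
      using \<open>finite A\<close> assms(3) by (intro Max_ge) auto
    finally show ?thesis by simp
  qed
  then show "Max (f ` P) \<le> Max (f ` A)"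
    using assms(1-3) by (intro Max.boundedI) auto
  show "Max (f ` A) \<le> Max (f ` P)"
    using assms(1-3) by (intro Max_mono) auto
qed

lemma DERIV_Max_active:
  fixes f :: "'p \<Rightarrow> real \<Rightarrow> real"
  assumes P: "finite P" "P \<noteq> {}"
    and cont: "\<And>p. p \<in> P \<Longrightarrow> isCont (f p) t"
    and active: "\<And>p. p \<in> P \<Longrightarrow> f p t = Max ((\<lambda>q. f q t) ` P) \<Longrightarrow>
        (f p has_real_derivative D) (at t)"
  shows "((\<lambda>s. Max ((\<lambda>p. f p s) ` P)) has_real_derivative D) (at t)"
proof -
  define A where "A = {p \<in> P. f p t = Max ((\<lambda>q. f q t) ` P)}"
  have A: "A \<subseteq> P" "finite A"
    using P unfolding A_def by auto
  have "Max ((\<lambda>q. f q t) ` P) \<in> (\<lambda>q. f q t) ` P"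
    using P by (intro Max_in) auto
  then obtain p0 where p0: "p0 \<in> A"
    unfolding A_def by force
  have below_at_t: "f p t < f p0 t" if p: "p \<in> P - A" for p
  proof -
    have "f p t \<le> Max ((\<lambda>q. f q t) ` P)"
      using P p by (intro Max_ge) auto
    moreover have "f p t \<noteq> Max ((\<lambda>q. f q t) ` P)"
      using p unfolding A_def by blast
    ultimately show ?thesis
      using p0 unfolding A_def by simp
  qed
  have "eventually (\<lambda>s. f p s < f p0 s) (at t)" if p: "p \<in> P - A" for p
  proof -
    have "((\<lambda>s. f p0 s - f p s) \<longlongrightarrow> f p0 t - f p t) (at t)"
      using p p0 A cont unfolding isCont_def by (intro tendsto_diff) auto
    moreover have "0 < f p0 t - f p t"
      using below_at_t[OF p] by simp
    ultimately have "eventually (\<lambda>s. 0 < f p0 s - f p s) (at t)"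
      by (rule order_tendstoD(1))
    then show ?thesis
      by eventually_elim simp
  qed
  then have "eventually (\<lambda>s. \<forall>p\<in>P - A. f p s < f p0 s) (at t)"
    using P by (intro eventually_ball_finite) auto
  then have Max_eq_near: "eventually (\<lambda>s. Max ((\<lambda>p. f p s) ` P) = Max ((\<lambda>p. f p s) ` A)) (at t)"
    by eventually_elim (use P A p0 in \<open>auto intro: Max_image_eq_Max_subset\<close>)
  have "Max ((\<lambda>p. f p t) ` P) = Max ((\<lambda>p. f p t) ` A)"
    using P A p0 below_at_t by (intro Max_image_eq_Max_subset) auto
  then have "((\<lambda>s. Max ((\<lambda>p. f p s) ` P)) has_real_derivative D) (at t) \<longleftrightarrow>
      ((\<lambda>s. Max ((\<lambda>p. f p s) ` A)) has_real_derivative D) (at t)"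
    by (rule has_field_derivative_cong_eventually[OF Max_eq_near])
  moreover have "((\<lambda>s. Max ((\<lambda>p. f p s) ` A)) has_real_derivative D) (at t)"
  proof (rule DERIV_Max_same[where c = "f p0 t"])
    show "f p t = f p0 t" if "p \<in> A" for p
      using that p0 unfolding A_def by simp
    show "(f p has_real_derivative D) (at t)" if "p \<in> A" for p
      using that active unfolding A_def by simp
  qed (use A p0 in auto)
  ultimately show ?thesis by simp
qed

lemma has_real_derivative_norm_unless_isolated_zero:
  fixes w :: "real \<Rightarrow> 'b::real_inner"
  assumes "(w has_vector_derivative w') (at t)" "\<not> t isolated_in {s. w s = 0}"
  shows "((\<lambda>s. norm (w s)) has_real_derivative (if w t = 0 then 0 else w' \<bullet> sgn (w t))) (at t)"
proof (cases "w t = 0")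
  case True
  then have "w' = 0"
    using isolated_zero_if_nonzero_derivative[OF assms(1)] assms(2) by blast
  with True show ?thesis
    using has_real_derivative_norm_at_zero[of w t] assms(1) by simp
next
  case False
  then show ?thesis
    using has_real_derivative_norm[OF assms(1)] by simp
qed

lemma DERIV_eq_unless_isolated:
  assumes "(f has_real_derivative Df) (at t)" "(g has_real_derivative Dg) (at t)" "f t = g t"
    and "\<not> t isolated_in {s. f s = g s}"
  shows "Df = Dg"
proof (rule ccontr)
  assume "Df \<noteq> Dg"
  moreover have "((\<lambda>s. f s - g s) has_vector_derivative Df - Dg) (at t)"
    using DERIV_diff[OF assms(1,2)] by (simp add: has_real_derivative_iff_has_vector_derivative)
  ultimately have "t isolated_in {s. f s - g s = 0}"
    using assms(3) by (intro isolated_zero_if_nonzero_derivative) auto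
  with assms(4) show False
    by simp
qed

lemma Max_norm_differentiable_off_countable:
  fixes w :: "'p \<Rightarrow> real \<Rightarrow> 'a::real_inner"
  assumes P: "finite P" "P \<noteq> {}"
    and w: "\<And>p t. p \<in> P \<Longrightarrow> t \<in> S \<Longrightarrow> (w p has_vector_derivative w' p t) (at t)"
  obtains C where "countable C"
    "\<And>t. t \<in> S - C \<Longrightarrow> (\<lambda>s. Max ((\<lambda>p. norm (w p s)) ` P)) differentiable (at t)"
proof
  define C where "C = (\<Union>p\<in>P. {t. t isolated_in {s. w p s = 0}}) \<union>
    (\<Union>p\<in>P. \<Union>q\<in>P. {t. t isolated_in {s. norm (w p s) = norm (w q s)}})"
  show "countable C"
    unfolding C_def using P
    by (intro countable_Un countable_UN countable_isolated_points countable_finite) auto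
  fix t assume t: "t \<in> S - C"
  define D where "D p = (if w p t = 0 then 0 else w' p t \<bullet> sgn (w p t))" for p
  have D: "((\<lambda>s. norm (w p s)) has_real_derivative D p) (at t)" if "p \<in> P" for p
    unfolding D_def using that t w[OF that, of t]
    by (intro has_real_derivative_norm_unless_isolated_zero) (auto simp: C_def)
  have "Max ((\<lambda>p. norm (w p t)) ` P) \<in> (\<lambda>p. norm (w p t)) ` P"
    using P by (intro Max_in) auto
  then obtain p0 where p0: "p0 \<in> P" "Max ((\<lambda>p. norm (w p t)) ` P) = norm (w p0 t)"
    by blast
  have "((\<lambda>s. Max ((\<lambda>p. norm (w p s)) ` P)) has_real_derivative D p0) (at t)"
  proof (rule DERIV_Max_active[OF P])
    show "isCont (\<lambda>s. norm (w p s)) t" if "p \<in> P" for p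
      using D[OF that] by (rule DERIV_isCont)
    show "((\<lambda>s. norm (w p s)) has_real_derivative D p0) (at t)"
      if "p \<in> P" "norm (w p t) = Max ((\<lambda>q. norm (w q t)) ` P)" for p
    proof -
      have "D p = D p0"
        using that p0 t unfolding C_def by (intro DERIV_eq_unless_isolated[OF D D]) auto
      with D[OF that(1)] show ?thesis by simp
    qed
  qed
  then show "(\<lambda>s. Max ((\<lambda>p. norm (w p s)) ` P)) differentiable (at t)"
    unfolding real_differentiable_def by blast
qed

lemma continuous_on_Max:
  fixes f :: "'p \<Rightarrow> 'a::topological_space \<Rightarrow> 'b::linorder_topology"
  assumes "finite P" "P \<noteq> {}" "\<And>p. p \<in> P \<Longrightarrow> continuous_on S (f p)"
  shows "continuous_on S (\<lambda>s. Max ((\<lambda>p. f p s) ` P))"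
  using assms by (induction P rule: finite_ne_induct) (auto intro: continuous_on_max)

lemma DERIV_eq_if_touching:
  fixes f g :: "real \<Rightarrow> real"
  assumes "(f has_real_derivative Df) (at t)" "(g has_real_derivative Dg) (at t)"
    and "\<And>s. f s \<le> g s" "f t = g t"
  shows "Df = Dg"
proof -
  have "Dg - Df = 0"
    by (rule DERIV_local_min[OF DERIV_diff[OF assms(2,1)], of 1]) (use assms(3,4) in auto)
  then show ?thesis by simp
qed

lemma integral_has_real_derivative_halfline:
  fixes f :: "real \<Rightarrow> real"
  assumes "continuous_on {a..} f" "a \<le> x"
  shows "((\<lambda>u. integral {a..u} f) has_real_derivative f x) (at x within {a..})"
proof -
  have "at x within {a..} = at x within {a..x + 1}"
    by (rule at_within_nhd[where S = "{x - 1<..<x + 1}"]) (use assms in auto)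
  moreover have "continuous_on {a..x + 1} f"
    using assms(1) by (rule continuous_on_subset) auto
  ultimately show ?thesis
    using integral_has_real_derivative[of a "x + 1" f x] assms(2) by simp
qed

lemma norm_diff_le_integral_of_derivative_bound:
  fixes u :: "real \<Rightarrow> 'a::banach"
  assumes "a \<le> b"
    and "\<And>s. s \<in> {a..b} \<Longrightarrow> (u has_vector_derivative u' s) (at s within {a..b})"
    and "continuous_on {a..b} u'" "continuous_on {a..b} m"
    and "\<And>s. s \<in> {a..b} \<Longrightarrow> norm (u' s) \<le> m s"
  shows "norm (u b - u a) \<le> integral {a..b} m"
proof -
  have "u b - u a = integral {a..b} u'"
    using fundamental_theorem_of_calculus[OF assms(1,2)] by (simp add: integral_unique)
  also have "norm \<dots> \<le> integral {a..b} m"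
    using assms(3-5) by (intro integral_norm_bound_integral integrable_continuous_interval)
  finally show ?thesis .
qed

section \<open>The delayed Cucker--Smale system\<close>

locale delayed_cs =
  fixes N :: nat and \<sigma> \<tau> :: real and \<psi> :: "real \<Rightarrow> real"
    and x v dv :: "nat \<Rightarrow> real \<Rightarrow> 'a::euclidean_space"
  assumes N2: "N \<ge> 2"
    and sigma_nonneg: "0 \<le> \<sigma>" and sigma_le_tau: "\<sigma> \<le> \<tau>"
    and psi_pos: "\<And>r. 0 \<le> r \<Longrightarrow> \<psi> r > 0"
    and psi_le1: "\<And>r. 0 \<le> r \<Longrightarrow> \<psi> r \<le> 1"
    and v_cont: "\<And>i. i \<in> {1..N} \<Longrightarrow> continuous_on {- \<tau>..} (v i)"
    and v_deriv: "\<And>i t. i \<in> {1..N} \<Longrightarrow> t \<ge> 0 \<Longrightarrow>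
        (v i has_vector_derivative dv i t) (at t within {0..})"
    and dv_cont: "\<And>i. i \<in> {1..N} \<Longrightarrow> continuous_on {0..} (dv i)"
    and ode: "\<And>i t. i \<in> {1..N} \<Longrightarrow> t > 0 \<Longrightarrow>
        dv i t = (\<Sum>j\<in>{1..N} - {i}. cs_a \<psi> N x \<sigma> \<tau> i j t *\<^sub>R (v j (t - \<tau>) - v i (t - \<sigma>)))"
begin

lemma tau_nonneg: "0 \<le> \<tau>"
  using sigma_nonneg sigma_le_tau by simp

lemma N_minus_1_pos: "0 < real N - 1"
  using N2 by simp

lemma v_has_vector_derivative: "i \<in> {1..N} \<Longrightarrow> t > 0 \<Longrightarrow> (v i has_vector_derivative dv i t) (at t)"
  using v_deriv[of i t] at_within_interior[of t "{0..}"] by simp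

definition acc_max :: "real \<Rightarrow> real" where
  "acc_max r = Max ((\<lambda>i. norm (dv i r)) ` {1..N})"

lemma norm_dv_le_acc_max: "i \<in> {1..N} \<Longrightarrow> norm (dv i r) \<le> acc_max r"
  unfolding acc_max_def by (rule Max_ge) auto

lemma acc_max_attained: "\<exists>i\<in>{1..N}. acc_max r = norm (dv i r)"
proof -
  have "acc_max r \<in> (\<lambda>i. norm (dv i r)) ` {1..N}"
    unfolding acc_max_def using N2 by (intro Max_in) auto
  then show ?thesis by auto
qed

lemma acc_max_nonneg: "0 \<le> acc_max r"
  using acc_max_attained[of r] by auto

lemma continuous_on_acc_max: "continuous_on {0..} acc_max"
  unfolding acc_max_def using N2 dv_cont by (intro continuous_on_Max continuous_intros) auto

definition acc_int :: "real \<Rightarrow> real" where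
  "acc_int u = integral {0..u} acc_max"

lemma acc_int_has_derivative_within:
  "0 \<le> u \<Longrightarrow> (acc_int has_real_derivative acc_max u) (at u within {0..})"
  unfolding acc_int_def by (rule integral_has_real_derivative_halfline[OF continuous_on_acc_max])

lemma acc_int_has_derivative: "0 < u \<Longrightarrow> (acc_int has_real_derivative acc_max u) (at u)"
  using acc_int_has_derivative_within[of u] at_within_interior[of u "{0..}"] by simp

lemma continuous_on_acc_int: "continuous_on {0..} acc_int"
  using acc_int_has_derivative_within by (intro DERIV_continuous_on) auto

lemma acc_max_integrable_on: "0 \<le> a \<Longrightarrow> acc_max integrable_on {a..b}"
  by (intro integrable_continuous_interval continuous_on_subset[OF continuous_on_acc_max]) auto

lemma integral_acc_max:
  assumes "0 \<le> a" "a \<le> b"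
  shows "integral {a..b} acc_max = acc_int b - acc_int a"
  using Henstock_Kurzweil_Integration.integral_combine[OF assms acc_max_integrable_on[OF order_refl]]
  unfolding acc_int_def by simp

lemma acc_int_mono: "0 \<le> a \<Longrightarrow> a \<le> b \<Longrightarrow> acc_int a \<le> acc_int b"
  using integral_acc_max[of a b] integral_nonneg[OF acc_max_integrable_on[of a b]] acc_max_nonneg
  by force

lemma norm_v_diff_le_acc_int:
  assumes i: "i \<in> {1..N}" and ab: "0 \<le> a" "a \<le> b"
  shows "norm (v i b - v i a) \<le> acc_int b - acc_int a"
proof -
  have "norm (v i b - v i a) \<le> integral {a..b} acc_max"
  proof (rule norm_diff_le_integral_of_derivative_bound[where u' = "dv i"])
    show "(v i has_vector_derivative dv i s) (at s within {a..b})" if "s \<in> {a..b}" for s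
      using v_deriv[OF i, of s] that ab by (auto intro: has_vector_derivative_within_subset)
    show "continuous_on {a..b} (dv i)"
      using dv_cont[OF i] by (rule continuous_on_subset) (use ab in auto)
    show "continuous_on {a..b} acc_max"
      using continuous_on_acc_max by (rule continuous_on_subset) (use ab in auto)
  qed (use ab norm_dv_le_acc_max i in auto)
  then show ?thesis
    using integral_acc_max ab by simp
qed

definition vgap :: "nat \<times> nat \<Rightarrow> real \<Rightarrow> 'a" where
  "vgap p s = v (fst p) s - v (snd p) s"

lemma d_v_eq_Max: "d_v N v s = Max ((\<lambda>p. norm (vgap p s)) ` ({1..N} \<times> {1..N}))"
proof -
  have "{norm (v i s - v j s) | i j. i \<in> {1..N} \<and> j \<in> {1..N}} =
      (\<lambda>p. norm (vgap p s)) ` ({1..N} \<times> {1..N})"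
    unfolding vgap_def by force
  then show ?thesis
    unfolding d_v_def by simp
qed

lemma norm_v_diff_le_d_v: "i \<in> {1..N} \<Longrightarrow> j \<in> {1..N} \<Longrightarrow> norm (v i s - v j s) \<le> d_v N v s"
  unfolding d_v_eq_Max by (rule Max_ge) (auto simp: vgap_def intro!: image_eqI[of _ _ "(i, j)"])

lemma d_v_attained: "\<exists>i\<in>{1..N}. \<exists>j\<in>{1..N}. d_v N v s = norm (v i s - v j s)"
proof -
  have "d_v N v s \<in> (\<lambda>p. norm (vgap p s)) ` ({1..N} \<times> {1..N})"
    unfolding d_v_eq_Max using N2 by (intro Max_in) auto
  then show ?thesis
    unfolding vgap_def by force
qed

lemma d_v_nonneg: "0 \<le> d_v N v s"
  using d_v_attained[of s] by auto

lemma continuous_on_d_v: "continuous_on {- \<tau>..} (d_v N v)"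
proof -
  have "continuous_on {- \<tau>..} (\<lambda>s. norm (vgap p s))" if "p \<in> {1..N} \<times> {1..N}" for p
    unfolding vgap_def using that by (intro continuous_intros v_cont) auto
  then have "continuous_on {- \<tau>..} (\<lambda>s. Max ((\<lambda>p. norm (vgap p s)) ` ({1..N} \<times> {1..N})))"
    using N2 by (intro continuous_on_Max) auto
  then show ?thesis
    unfolding d_v_eq_Max .
qed

lemma d_v_differentiable_off_countable:
  obtains C where "countable C" "\<And>t. 0 < t \<Longrightarrow> t \<notin> C \<Longrightarrow> d_v N v differentiable (at t)"
proof -
  have fin: "finite ({1..N} \<times> {1..N})" and ne: "{1..N} \<times> {1..N} \<noteq> {}"
    using N2 by auto
  have deriv: "(vgap p has_vector_derivative dv (fst p) t - dv (snd p) t) (at t)"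
    if "p \<in> {1..N} \<times> {1..N}" "t \<in> {0<..}" for p t
    unfolding vgap_def[abs_def] using that
    by (intro has_vector_derivative_diff v_has_vector_derivative) auto
  obtain C where C: "countable C"
    "\<And>t. t \<in> {0<..} - C \<Longrightarrow> (\<lambda>s. Max ((\<lambda>p. norm (vgap p s)) ` ({1..N} \<times> {1..N}))) differentiable (at t)"
    using Max_norm_differentiable_off_countable[where S = "{0<..}" and w = vgap, OF fin ne deriv]
    by blast
  have d_v_fun: "d_v N v = (\<lambda>s. Max ((\<lambda>p. norm (vgap p s)) ` ({1..N} \<times> {1..N})))"
    by (rule ext) (rule d_v_eq_Max)
  show ?thesis
  proof (rule that[OF C(1)])
    fix t assume "0 < t" "t \<notin> C"
    then show "d_v N v differentiable (at t)"
      unfolding d_v_fun using C(2) by simp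
  qed
qed

subsection \<open>The memory term\<close>

definition exp_acc_int :: "real \<Rightarrow> real" where
  "exp_acc_int u = integral {0..u} (\<lambda>s. exp s * acc_int s)"

lemma continuous_on_exp_acc_int_integrand: "continuous_on {0..} (\<lambda>s. exp s * acc_int s)"
  using continuous_on_acc_int by (intro continuous_intros)

lemma exp_acc_int_has_derivative_within:
  "0 \<le> u \<Longrightarrow> (exp_acc_int has_real_derivative exp u * acc_int u) (at u within {0..})"
  unfolding exp_acc_int_def
  by (rule integral_has_real_derivative_halfline[OF continuous_on_exp_acc_int_integrand])

lemma exp_acc_int_has_derivative:
  "0 < u \<Longrightarrow> (exp_acc_int has_real_derivative exp u * acc_int u) (at u)"
  using exp_acc_int_has_derivative_within[of u] at_within_interior[of u "{0..}"] by simp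

lemma continuous_on_exp_acc_int: "continuous_on {0..} exp_acc_int"
  using exp_acc_int_has_derivative_within by (intro DERIV_continuous_on) auto

lemma exp_acc_int_integrand_has_integral:
  assumes "0 \<le> a" "a \<le> b"
  shows "((\<lambda>s. exp s * acc_int s) has_integral exp_acc_int b - exp_acc_int a) {a..b}"
proof -
  have integrable: "(\<lambda>s. exp s * acc_int s) integrable_on {c..b}" if "0 \<le> c" for c
    using that continuous_on_exp_acc_int_integrand
    by (intro integrable_continuous_interval) (auto elim: continuous_on_subset)
  have "integral {a..b} (\<lambda>s. exp s * acc_int s) = exp_acc_int b - exp_acc_int a"
    using Henstock_Kurzweil_Integration.integral_combine[OF assms integrable[OF order_refl]]
    unfolding exp_acc_int_def by simp
  with integrable[OF assms(1)] show ?thesis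
    by (simp add: has_integral_integral)
qed

definition memory :: "real \<Rightarrow> real" where
  "memory u = integral {max 0 (u - 2 * \<tau>)..u} (\<lambda>s. exp (- (u - s)) * integral {s..u} acc_max)"

lemma G_fun_eq: "G_fun N v dv \<beta> \<tau> u = d_v N v u + \<beta> * memory u"
  by (simp add: G_fun_def memory_def acc_max_def[abs_def])

lemma memory_integrand_has_integral:
  assumes a: "0 \<le> a" "a \<le> u"
  shows "((\<lambda>s. exp (- (u - s)) * integral {s..u} acc_max) has_integral
      acc_int u * (1 - exp (a - u)) - exp (- u) * (exp_acc_int u - exp_acc_int a)) {a..u}"
proof -
  have "((\<lambda>s. exp (s - u)) has_integral exp (u - u) - exp (a - u)) {a..u}"
  proof (rule fundamental_theorem_of_calculus)
    show "((\<lambda>s. exp (s - u)) has_vector_derivative exp (y - u)) (at y within {a..u})" for y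
      unfolding has_real_derivative_iff_has_vector_derivative[symmetric]
      by (auto intro!: derivative_eq_intros)
  qed (use a in simp)
  moreover have "((\<lambda>s. exp s * acc_int s) has_integral exp_acc_int u - exp_acc_int a) {a..u}"
    using a by (rule exp_acc_int_integrand_has_integral)
  ultimately have "((\<lambda>s. acc_int u * exp (s - u) - exp (- u) * (exp s * acc_int s)) has_integral
      acc_int u * (1 - exp (a - u)) - exp (- u) * (exp_acc_int u - exp_acc_int a)) {a..u}"
    by (intro has_integral_diff has_integral_mult_right) auto
  then show ?thesis
  proof (rule has_integral_eq[rotated])
    fix s assume s: "s \<in> {a..u}"
    have "integral {s..u} acc_max = acc_int u - acc_int s"
      using integral_acc_max[of s u] s a by simp
    moreover have "exp (- u) * (exp s * acc_int s) = exp (s - u) * acc_int s"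
      by (simp add: mult.assoc[symmetric] exp_add[symmetric])
    ultimately show "acc_int u * exp (s - u) - exp (- u) * (exp s * acc_int s) =
        exp (- (u - s)) * integral {s..u} acc_max"
      by (simp only:) (simp add: algebra_simps)
  qed
qed

lemma memory_eq:
  assumes "0 \<le> u"
  shows "memory u = acc_int u * (1 - exp (max 0 (u - 2 * \<tau>) - u))
    - exp (- u) * (exp_acc_int u - exp_acc_int (max 0 (u - 2 * \<tau>)))"
  unfolding memory_def using assms tau_nonneg
  by (intro integral_unique memory_integrand_has_integral) auto

lemma memory_eq_late:
  assumes "2 * \<tau> \<le> u"
  shows "memory u = acc_int u * (1 - exp (- 2 * \<tau>))
    - exp (- u) * (exp_acc_int u - exp_acc_int (u - 2 * \<tau>))"
  using memory_eq[of u] assms tau_nonneg by (simp add: max_def)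

lemma memory_nonneg:
  assumes "0 \<le> u"
  shows "0 \<le> memory u"
proof -
  have "((\<lambda>s. exp (- (u - s)) * integral {s..u} acc_max) has_integral
      acc_int u * (1 - exp (max 0 (u - 2 * \<tau>) - u))
      - exp (- u) * (exp_acc_int u - exp_acc_int (max 0 (u - 2 * \<tau>)))) {max 0 (u - 2 * \<tau>)..u}"
    using assms tau_nonneg by (intro memory_integrand_has_integral) auto
  moreover have "0 \<le> exp (- (u - s)) * integral {s..u} acc_max" if "0 \<le> s" "s \<le> u" for s
    using integral_acc_max[OF that] acc_int_mono[OF that] by simp
  ultimately show ?thesis
    unfolding memory_def using assms by (intro integral_nonneg has_integral_integrable) auto
qed

lemma continuous_on_memory: "continuous_on {0..} memory"
proof -
  have "continuous_on {0..} (\<lambda>u. max 0 (u - 2 * \<tau>))"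
    by (intro continuous_intros)
  then have "continuous_on {0..} (\<lambda>u. exp_acc_int (max 0 (u - 2 * \<tau>)))"
    by (rule continuous_on_compose2[OF continuous_on_exp_acc_int]) auto
  then have "continuous_on {0..} (\<lambda>u. acc_int u * (1 - exp (max 0 (u - 2 * \<tau>) - u))
      - exp (- u) * (exp_acc_int u - exp_acc_int (max 0 (u - 2 * \<tau>))))"
    using continuous_on_acc_int continuous_on_exp_acc_int by (intro continuous_intros)
  then show ?thesis
    by (rule continuous_on_eq) (simp add: memory_eq)
qed

lemma continuous_on_G_fun: "continuous_on {0..} (G_fun N v dv \<beta> \<tau>)"
proof -
  have "continuous_on {0..} (d_v N v)"
    using continuous_on_d_v by (rule continuous_on_subset) (use tau_nonneg in auto)
  then show ?thesis
    unfolding G_fun_eq[abs_def] using continuous_on_memory by (intro continuous_intros)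
qed

lemma memory_has_derivative:
  assumes t: "t > 2 * \<tau>"
  shows "(memory has_real_derivative acc_max t * (1 - exp (- 2 * \<tau>)) - memory t
      - exp (- 2 * \<tau>) * (acc_int t - acc_int (t - 2 * \<tau>))) (at t)"
proof -
  define R where "R u = acc_int u * (1 - exp (- 2 * \<tau>))
    - exp (- u) * (exp_acc_int u - exp_acc_int (u - 2 * \<tau>))" for u
  have memory_R: "memory u = R u" if "2 * \<tau> \<le> u" for u
    unfolding R_def using that by (rule memory_eq_late)
  have t_pos: "0 < t" "0 < t - 2 * \<tau>"
    using t tau_nonneg by auto
  have shifted: "((\<lambda>u. exp_acc_int (u - 2 * \<tau>)) has_real_derivative
      exp (t - 2 * \<tau>) * acc_int (t - 2 * \<tau>)) (at t)"
    using exp_acc_int_has_derivative[OF t_pos(2)] DERIV_shift[of exp_acc_int _ t "- 2 * \<tau>"]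
    by simp
  have exp_minus: "((\<lambda>u. exp (- u)) has_real_derivative exp (- t) * (- 1)) (at t)"
    by (auto intro!: derivative_eq_intros)
  have R_deriv: "(R has_real_derivative acc_max t * (1 - exp (- 2 * \<tau>))
      - (exp (- t) * (- 1) * (exp_acc_int t - exp_acc_int (t - 2 * \<tau>))
        + (exp t * acc_int t - exp (t - 2 * \<tau>) * acc_int (t - 2 * \<tau>)) * exp (- t))) (at t)"
    unfolding R_def[abs_def] using t_pos
    by (intro DERIV_diff DERIV_cmult_right DERIV_mult acc_int_has_derivative
        exp_acc_int_has_derivative shifted exp_minus)
  have exp_cancel: "(exp t * acc_int t - exp (t - 2 * \<tau>) * acc_int (t - 2 * \<tau>)) * exp (- t) =
      acc_int t - exp (- 2 * \<tau>) * acc_int (t - 2 * \<tau>)"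
  proof -
    have "exp t * exp (- t) = 1" "exp (t - 2 * \<tau>) * exp (- t) = exp (- 2 * \<tau>)"
      by (simp_all add: exp_add[symmetric])
    moreover have "(exp t * acc_int t - exp (t - 2 * \<tau>) * acc_int (t - 2 * \<tau>)) * exp (- t) =
        (exp t * exp (- t)) * acc_int t - (exp (t - 2 * \<tau>) * exp (- t)) * acc_int (t - 2 * \<tau>)"
      by (simp add: algebra_simps)
    ultimately show ?thesis
      by (simp only: mult_1)
  qed
  have "(R has_real_derivative acc_max t * (1 - exp (- 2 * \<tau>)) - memory t
      - exp (- 2 * \<tau>) * (acc_int t - acc_int (t - 2 * \<tau>))) (at t)"
    by (rule DERIV_cong[OF R_deriv])
      (unfold exp_cancel memory_R[OF less_imp_le[OF t]] R_def, simp add: algebra_simps)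
  then show ?thesis
  proof (rule has_field_derivative_transform_within_open[where S = "{2 * \<tau><..}"])
    show "R u = memory u" if "u \<in> {2 * \<tau><..}" for u
      using memory_R[of u] that by simp
  qed (use t in auto)
qed

subsection \<open>Estimates along the flow\<close>

abbreviation weight :: "nat \<Rightarrow> nat \<Rightarrow> real \<Rightarrow> real" where
  "weight i j t \<equiv> cs_a \<psi> N x \<sigma> \<tau> i j t"

abbreviation weight_min :: "real \<Rightarrow> real" where
  "weight_min t \<equiv> a_min \<psi> N x \<sigma> \<tau> t"

lemma weight_pos: "0 < weight i j t"
  unfolding cs_a_def using psi_pos[of "norm (x i (t - \<sigma>) - x j (t - \<tau>))"] N_minus_1_pos by simp

lemma weight_le: "weight i j t \<le> 1 / (real N - 1)"
  unfolding cs_a_def using psi_le1[of "norm (x i (t - \<sigma>) - x j (t - \<tau>))"] N_minus_1_pos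
  by (simp add: divide_right_mono)

lemma weight_min_eq_Min: "weight_min t = Min ((\<lambda>p. weight (fst p) (snd p) t) ` ({1..N} \<times> {1..N}))"
proof -
  have "{weight i j t | i j. i \<in> {1..N} \<and> j \<in> {1..N}} =
      (\<lambda>p. weight (fst p) (snd p) t) ` ({1..N} \<times> {1..N})"
    by force
  then show ?thesis
    unfolding a_min_def by simp
qed

lemma weight_min_le: "i \<in> {1..N} \<Longrightarrow> j \<in> {1..N} \<Longrightarrow> weight_min t \<le> weight i j t"
  unfolding weight_min_eq_Min by (rule Min_le) (auto intro!: image_eqI[of _ _ "(i, j)"])

lemma weight_min_attained: "\<exists>i j. weight_min t = weight i j t"
proof -
  have "weight_min t \<in> (\<lambda>p. weight (fst p) (snd p) t) ` ({1..N} \<times> {1..N})"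
    unfolding weight_min_eq_Min using N2 by (intro Min_in) auto
  then show ?thesis by auto
qed

lemma weight_min_nonneg: "0 \<le> weight_min t"
  using weight_min_attained[of t] weight_pos by (metis less_imp_le)

lemma scaled_weight_min_le_1: "(real N - 1) * weight_min t \<le> 1"
  using weight_min_attained[of t] weight_le N_minus_1_pos by (metis pos_le_divide_eq mult.commute)

lemma sum_weight_le_1:
  assumes "i \<in> {1..N}"
  shows "(\<Sum>k\<in>{1..N} - {i}. weight i k t) \<le> 1"
proof -
  have "(\<Sum>k\<in>{1..N} - {i}. weight i k t) \<le> real (card ({1..N} - {i})) * (1 / (real N - 1))"
    by (rule sum_bounded_above) (rule weight_le)
  also have "real (card ({1..N} - {i})) = real N - 1"
    using assms N2 by simp
  finally show ?thesis
    using N_minus_1_pos by simp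
qed

lemma inner_delayed_gap_le:
  assumes i: "i \<in> {1..N}" and k: "k \<in> {1..N}" and t: "\<tau> < t" and u: "norm u \<le> 1"
  shows "u \<bullet> (v k (t - \<tau>) - v i (t - \<sigma>)) \<le> u \<bullet> (v k t - v i t) + 2 * (acc_int t - acc_int (t - \<tau>))"
proof -
  have t_pos: "0 \<le> t - \<tau>"
    using t by simp
  have inner_le: "u \<bullet> z \<le> norm z" for z
    using norm_cauchy_schwarz[of u z] mult_right_mono[OF u norm_ge_zero[of z]] by simp
  have "norm (v i t - v i (t - \<sigma>)) \<le> acc_int t - acc_int (t - \<tau>)"
    using norm_v_diff_le_acc_int[OF i, of "t - \<sigma>" t] acc_int_mono[of "t - \<tau>" "t - \<sigma>"]
      t_pos sigma_nonneg sigma_le_tau by simp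
  moreover have "norm (v k (t - \<tau>) - v k t) \<le> acc_int t - acc_int (t - \<tau>)"
    using norm_v_diff_le_acc_int[OF k, of "t - \<tau>" t] t_pos tau_nonneg
    by (simp add: norm_minus_commute)
  ultimately show ?thesis
    using inner_le[of "v k (t - \<tau>) - v k t"] inner_le[of "v i t - v i (t - \<sigma>)"]
    by (simp add: inner_diff_right)
qed

text \<open>Since \<open>u\<close> points away from all other agents, each weight may be replaced by the
  smallest one.\<close>
lemma inner_dv_le:
  assumes i: "i \<in> {1..N}" and t: "\<tau> < t" and u: "norm u \<le> 1"
    and away: "\<And>k. k \<in> {1..N} \<Longrightarrow> u \<bullet> (v k t - v i t) \<le> 0"
  shows "u \<bullet> dv i t \<le> weight_min t * (\<Sum>k\<in>{1..N}. u \<bullet> (v k t - v i t))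
    + 2 * (acc_int t - acc_int (t - \<tau>))"
proof -
  define I where "I = acc_int t - acc_int (t - \<tau>)"
  have t_pos: "0 < t" "0 \<le> t - \<tau>"
    using t tau_nonneg by auto
  have "0 \<le> I"
    unfolding I_def using acc_int_mono[of "t - \<tau>" t] t_pos tau_nonneg by simp
  have term_le: "weight i k t * (u \<bullet> (v k (t - \<tau>) - v i (t - \<sigma>)))
      \<le> weight_min t * (u \<bullet> (v k t - v i t)) + weight i k t * (2 * I)"
    if k: "k \<in> {1..N} - {i}" for k
  proof -
    have "weight i k t * (u \<bullet> (v k (t - \<tau>) - v i (t - \<sigma>)))
        \<le> weight i k t * (u \<bullet> (v k t - v i t)) + weight i k t * (2 * I)"
      using inner_delayed_gap_le[OF i _ t u, of k] k weight_pos[of i k t] unfolding I_def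
      by (simp add: distrib_left[symmetric])
    moreover have "weight i k t * (u \<bullet> (v k t - v i t)) \<le> weight_min t * (u \<bullet> (v k t - v i t))"
      using weight_min_le[OF i, of k t] k away[of k] by (intro mult_right_mono_neg) auto
    ultimately show ?thesis by simp
  qed
  have "u \<bullet> dv i t = (\<Sum>k\<in>{1..N} - {i}. weight i k t * (u \<bullet> (v k (t - \<tau>) - v i (t - \<sigma>))))"
    using ode[OF i t_pos(1)] by (simp add: inner_sum_right)
  also have "\<dots> \<le> (\<Sum>k\<in>{1..N} - {i}. weight_min t * (u \<bullet> (v k t - v i t)) + weight i k t * (2 * I))"
    by (rule sum_mono) (rule term_le)
  also have "\<dots> = weight_min t * (\<Sum>k\<in>{1..N} - {i}. u \<bullet> (v k t - v i t))
      + (\<Sum>k\<in>{1..N} - {i}. weight i k t) * (2 * I)"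
    by (simp add: sum.distrib sum_distrib_left sum_distrib_right)
  also have "(\<Sum>k\<in>{1..N} - {i}. u \<bullet> (v k t - v i t)) = (\<Sum>k\<in>{1..N}. u \<bullet> (v k t - v i t))"
    using i by (simp add: sum_diff1)
  also have "(\<Sum>k\<in>{1..N} - {i}. weight i k t) * (2 * I) \<le> 1 * (2 * I)"
    using sum_weight_le_1[OF i, of t] \<open>0 \<le> I\<close> by (intro mult_right_mono) auto
  finally show ?thesis
    unfolding I_def by simp
qed

lemma acc_max_le:
  assumes r: "\<tau> < r"
  shows "acc_max r \<le> d_v N v (r - \<tau>) + (acc_int r - acc_int (r - \<tau>))"
proof -
  define Q where "Q = d_v N v (r - \<tau>) + (acc_int r - acc_int (r - \<tau>))"
  have r_pos: "0 < r" "0 \<le> r - \<tau>"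
    using r tau_nonneg by auto
  have "0 \<le> Q"
    unfolding Q_def using d_v_nonneg acc_int_mono[of "r - \<tau>" r] r_pos tau_nonneg
    by (simp add: add_nonneg_nonneg)
  obtain i where i: "i \<in> {1..N}" "acc_max r = norm (dv i r)"
    using acc_max_attained by blast
  have term_le: "norm (v k (r - \<tau>) - v i (r - \<sigma>)) \<le> Q" if k: "k \<in> {1..N} - {i}" for k
  proof -
    have "norm (v k (r - \<tau>) - v i (r - \<sigma>))
        \<le> norm (v k (r - \<tau>) - v i (r - \<tau>)) + norm (v i (r - \<sigma>) - v i (r - \<tau>))"
      using norm_triangle_ineq4[of "v k (r - \<tau>) - v i (r - \<tau>)" "v i (r - \<sigma>) - v i (r - \<tau>)"]
      by simp
    moreover have "norm (v k (r - \<tau>) - v i (r - \<tau>)) \<le> d_v N v (r - \<tau>)"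
      using norm_v_diff_le_d_v k i by simp
    moreover have "norm (v i (r - \<sigma>) - v i (r - \<tau>)) \<le> acc_int (r - \<sigma>) - acc_int (r - \<tau>)"
      using norm_v_diff_le_acc_int[OF i(1), of "r - \<tau>" "r - \<sigma>"] r_pos sigma_le_tau by simp
    moreover have "acc_int (r - \<sigma>) \<le> acc_int r"
      using acc_int_mono[of "r - \<sigma>" r] r_pos sigma_nonneg sigma_le_tau by simp
    ultimately show ?thesis
      unfolding Q_def by linarith
  qed
  have "acc_max r \<le> (\<Sum>k\<in>{1..N} - {i}. norm (weight i k r *\<^sub>R (v k (r - \<tau>) - v i (r - \<sigma>))))"
    using i ode[OF i(1) r_pos(1)] norm_sum by metis
  also have "\<dots> = (\<Sum>k\<in>{1..N} - {i}. weight i k r * norm (v k (r - \<tau>) - v i (r - \<sigma>)))"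
    using weight_pos by (simp add: less_imp_le)
  also have "\<dots> \<le> (\<Sum>k\<in>{1..N} - {i}. weight i k r * Q)"
    using term_le weight_pos by (intro sum_mono mult_left_mono) (auto intro: less_imp_le)
  also have "\<dots> = (\<Sum>k\<in>{1..N} - {i}. weight i k r) * Q"
    by (simp add: sum_distrib_right)
  also have "\<dots> \<le> 1 * Q"
    using sum_weight_le_1[OF i(1), of r] \<open>0 \<le> Q\<close> by (intro mult_right_mono) auto
  finally show ?thesis
    unfolding Q_def by simp
qed

lemma maximal_pair_direction:
  assumes ij: "i \<in> {1..N}" "j \<in> {1..N}" "d_v N v t = norm (v i t - v j t)" and k: "k \<in> {1..N}"
  shows "sgn (v i t - v j t) \<bullet> (v k t - v i t) \<le> 0" "(- sgn (v i t - v j t)) \<bullet> (v k t - v j t) \<le> 0"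
proof -
  define e where "e = sgn (v i t - v j t)"
  have gap: "e \<bullet> (v i t - v j t) = d_v N v t"
    unfolding e_def ij(3) by (rule sgn_inner_self)
  have "e \<bullet> (v l t - v m t) \<le> d_v N v t" if "l \<in> {1..N}" "m \<in> {1..N}" for l m
  proof -
    have "e \<bullet> (v l t - v m t) \<le> norm e * norm (v l t - v m t)"
      by (rule norm_cauchy_schwarz)
    also have "\<dots> \<le> 1 * d_v N v t"
      unfolding e_def using norm_v_diff_le_d_v[OF that]
      by (intro mult_mono) (auto simp: norm_sgn)
    finally show ?thesis by simp
  qed
  from this[OF k ij(2)] this[OF ij(1) k] gap
  show "e \<bullet> (v k t - v i t) \<le> 0" "(- e) \<bullet> (v k t - v j t) \<le> 0"
    by (simp_all add: inner_diff_right)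
qed

lemma d_v_derivative_eq:
  assumes t: "0 < t" and D: "(d_v N v has_real_derivative D) (at t)"
    and ij: "i \<in> {1..N}" "j \<in> {1..N}" "d_v N v t = norm (v i t - v j t)" "v i t \<noteq> v j t"
  shows "D = sgn (v i t - v j t) \<bullet> (dv i t - dv j t)"
proof -
  have "((\<lambda>s. norm (v i s - v j s)) has_real_derivative
      (dv i t - dv j t) \<bullet> sgn (v i t - v j t)) (at t)"
    using t ij by (intro has_real_derivative_norm has_vector_derivative_diff v_has_vector_derivative) auto
  from DERIV_eq_if_touching[OF this D] show ?thesis
    using norm_v_diff_le_d_v ij by (simp add: inner_commute)
qed

lemma d_v_derivative_le:
  assumes t: "\<tau> < t" and D: "(d_v N v has_real_derivative D) (at t)"
  shows "D \<le> - (real N - 1) * weight_min t * d_v N v t + 4 * (acc_int t - acc_int (t - \<tau>))"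
proof (cases "d_v N v t = 0")
  case True
  have "0 = D"
    by (rule DERIV_eq_if_touching[OF DERIV_const D]) (use True d_v_nonneg in auto)
  moreover have "acc_int (t - \<tau>) \<le> acc_int t"
    using acc_int_mono[of "t - \<tau>" t] t tau_nonneg by simp
  ultimately show ?thesis
    using True by simp
next
  case False
  obtain i j where ij: "i \<in> {1..N}" "j \<in> {1..N}" "d_v N v t = norm (v i t - v j t)"
    using d_v_attained by blast
  define e where "e = sgn (v i t - v j t)"
  have "v i t \<noteq> v j t"
    using False ij(3) by auto
  then have D_eq: "D = e \<bullet> dv i t + (- e) \<bullet> dv j t"
    using d_v_derivative_eq[OF _ D ij] t tau_nonneg unfolding e_def by (simp add: inner_diff_right)
  have "norm e \<le> 1"
    unfolding e_def by (simp add: norm_sgn)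
  define S\<^sub>i where "S\<^sub>i = (\<Sum>k\<in>{1..N}. e \<bullet> (v k t - v i t))"
  define S\<^sub>j where "S\<^sub>j = (\<Sum>k\<in>{1..N}. (- e) \<bullet> (v k t - v j t))"
  have "e \<bullet> dv i t \<le> weight_min t * S\<^sub>i + 2 * (acc_int t - acc_int (t - \<tau>))"
    unfolding S\<^sub>i_def e_def using maximal_pair_direction(1)[OF ij] \<open>norm e \<le> 1\<close>
    by (intro inner_dv_le[OF ij(1) t]) (auto simp: e_def)
  moreover have "(- e) \<bullet> dv j t \<le> weight_min t * S\<^sub>j + 2 * (acc_int t - acc_int (t - \<tau>))"
    unfolding S\<^sub>j_def e_def using maximal_pair_direction(2)[OF ij] \<open>norm e \<le> 1\<close>
    by (intro inner_dv_le[OF ij(2) t]) (auto simp: e_def)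
  moreover have "S\<^sub>i + S\<^sub>j = - real N * d_v N v t"
    unfolding S\<^sub>i_def S\<^sub>j_def using sgn_inner_self[of "v i t - v j t"] ij(3)
    by (simp add: sum.distrib[symmetric] inner_diff_right algebra_simps e_def)
  then have "weight_min t * S\<^sub>i + weight_min t * S\<^sub>j = - real N * (weight_min t * d_v N v t)"
    by (simp add: distrib_left[symmetric])
  moreover have "- (real N - 1) * weight_min t * d_v N v t
      = - real N * (weight_min t * d_v N v t) + weight_min t * d_v N v t"
    by (simp add: algebra_simps)
  moreover have "0 \<le> weight_min t * d_v N v t"
    using weight_min_nonneg d_v_nonneg by simp
  ultimately show ?thesis
    unfolding D_eq by linarith
qed

lemma d_v_le_G_fun: "0 \<le> \<beta> \<Longrightarrow> 0 \<le> s \<Longrightarrow> d_v N v s \<le> G_fun N v dv \<beta> \<tau> s"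
  unfolding G_fun_eq using memory_nonneg[of s] by simp

lemma acc_int_window_le:
  assumes "0 \<le> \<beta>" and t: "2 * \<tau> < t"
  shows "acc_int t - acc_int (t - \<tau>) \<le> integral {t - \<tau>..t} (\<lambda>s. G_fun N v dv \<beta> \<tau> (s - \<tau>))
    + \<tau> * (acc_int t - acc_int (t - 2 * \<tau>))"
proof -
  define J where "J = acc_int t - acc_int (t - 2 * \<tau>)"
  have t_pos: "0 < t - 2 * \<tau>"
    using t by simp
  have G_integrable: "(\<lambda>s. G_fun N v dv \<beta> \<tau> (s - \<tau>)) integrable_on {t - \<tau>..t}"
    by (intro integrable_continuous_interval continuous_on_compose2[OF continuous_on_G_fun])
      (use t_pos in \<open>auto intro!: continuous_intros\<close>)
  have "acc_int t - acc_int (t - \<tau>) = integral {t - \<tau>..t} acc_max"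
    using integral_acc_max[of "t - \<tau>" t] t_pos tau_nonneg by simp
  also have "\<dots> \<le> integral {t - \<tau>..t} (\<lambda>s. G_fun N v dv \<beta> \<tau> (s - \<tau>) + J)"
  proof (rule integral_le)
    show "acc_max integrable_on {t - \<tau>..t}"
      using t_pos tau_nonneg by (intro acc_max_integrable_on) simp
    show "(\<lambda>s. G_fun N v dv \<beta> \<tau> (s - \<tau>) + J) integrable_on {t - \<tau>..t}"
      using G_integrable by (intro integrable_add integrable_const_ivl)
    fix s assume s: "s \<in> {t - \<tau>..t}"
    have "acc_int s \<le> acc_int t" "acc_int (t - 2 * \<tau>) \<le> acc_int (s - \<tau>)"
      using acc_int_mono[of s t] acc_int_mono[of "t - 2 * \<tau>" "s - \<tau>"] s t_pos tau_nonneg by auto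
    moreover have "d_v N v (s - \<tau>) \<le> G_fun N v dv \<beta> \<tau> (s - \<tau>)"
      using d_v_le_G_fun[OF \<open>0 \<le> \<beta>\<close>, of "s - \<tau>"] s t_pos by simp
    ultimately show "acc_max s \<le> G_fun N v dv \<beta> \<tau> (s - \<tau>) + J"
      using acc_max_le[of s] s t_pos unfolding J_def by simp
  qed
  also have "\<dots> = integral {t - \<tau>..t} (\<lambda>s. G_fun N v dv \<beta> \<tau> (s - \<tau>)) + \<tau> * J"
    using integral_add[OF G_integrable integrable_const_ivl[of J "t - \<tau>" t]] tau_nonneg
    by (simp add: content_real)
  finally show ?thesis
    unfolding J_def .
qed

lemma G_fun_has_derivative:
  assumes "2 * \<tau> < t" "(d_v N v has_real_derivative D) (at t)"
  shows "(G_fun N v dv \<beta> \<tau> has_real_derivative D + \<beta> * (acc_max t * (1 - exp (- 2 * \<tau>))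
    - memory t - exp (- 2 * \<tau>) * (acc_int t - acc_int (t - 2 * \<tau>)))) (at t)"
  unfolding G_fun_eq[abs_def] using assms by (intro DERIV_add DERIV_cmult memory_has_derivative)

lemma G_fun_derivative_le:
  assumes beta_pos: "\<beta> > 0" and beta_cond: "2 * \<beta> * exp (- 2 * \<tau>) - 4 * \<tau> - \<beta> \<ge> 0"
    and t: "2 * \<tau> < t" and D: "(d_v N v has_real_derivative D) (at t)"
  shows "D + \<beta> * (acc_max t * (1 - exp (- 2 * \<tau>)) - memory t
      - exp (- 2 * \<tau>) * (acc_int t - acc_int (t - 2 * \<tau>)))
    \<le> 4 * integral {t - \<tau>..t} (\<lambda>s. G_fun N v dv \<beta> \<tau> (s - \<tau>))
      - (real N - 1) * weight_min t * G_fun N v dv \<beta> \<tau> t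
      + \<beta> * (1 - exp (- 2 * \<tau>)) * G_fun N v dv \<beta> \<tau> (t - \<tau>)"
proof -
  define G where "G = G_fun N v dv \<beta> \<tau>"
  define e where "e = exp (- 2 * \<tau>)"
  define J where "J = acc_int t - acc_int (t - 2 * \<tau>)"
  have t_pos: "0 < t - 2 * \<tau>" "\<tau> < t"
    using t tau_nonneg by auto
  have "0 < e" "e \<le> 1"
    unfolding e_def using tau_nonneg by auto
  have "0 \<le> J"
    unfolding J_def using acc_int_mono[of "t - 2 * \<tau>" t] t_pos tau_nonneg by simp
  have "0 \<le> memory t"
    using memory_nonneg[of t] t_pos tau_nonneg by simp
  have "acc_max t \<le> G (t - \<tau>) + J"
    using acc_max_le[OF t_pos(2)] acc_int_mono[of "t - 2 * \<tau>" "t - \<tau>"]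
      d_v_le_G_fun[of \<beta> "t - \<tau>"] beta_pos t_pos tau_nonneg
    unfolding G_def J_def by simp
  then have "\<beta> * (1 - e) * acc_max t \<le> \<beta> * (1 - e) * G (t - \<tau>) + \<beta> * (1 - e) * J"
    using beta_pos \<open>e \<le> 1\<close> by (simp add: mult_left_mono distrib_left[symmetric])
  moreover have "(real N - 1) * weight_min t * (\<beta> * memory t) \<le> \<beta> * memory t"
    using scaled_weight_min_le_1[of t] weight_min_nonneg[of t] N_minus_1_pos
      \<open>0 \<le> memory t\<close> beta_pos
    by (intro mult_left_le_one_le) auto
  moreover have "(4 * \<tau> + \<beta> * (1 - e) - \<beta> * e) * J \<le> 0"
  proof (rule mult_nonpos_nonneg)
    show "4 * \<tau> + \<beta> * (1 - e) - \<beta> * e \<le> 0"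
      using beta_cond unfolding e_def by (simp add: algebra_simps)
  qed (rule \<open>0 \<le> J\<close>)
  moreover have "G t = d_v N v t + \<beta> * memory t"
    unfolding G_def G_fun_eq ..
  ultimately show ?thesis
    using d_v_derivative_le[OF t_pos(2) D] acc_int_window_le[of \<beta> t] beta_pos t
    unfolding G_def[symmetric] e_def[symmetric] J_def[symmetric] by (simp add: algebra_simps)
qed

lemma deriv_G_fun_le:
  assumes beta_pos: "\<beta> > 0" and beta_cond: "2 * \<beta> * exp (- 2 * \<tau>) - 4 * \<tau> - \<beta> \<ge> 0"
    and t: "2 * \<tau> < t" and d_v_diff: "d_v N v differentiable (at t)"
  shows "G_fun N v dv \<beta> \<tau> differentiable (at t) \<and>
    deriv (G_fun N v dv \<beta> \<tau>) t
      \<le> 4 * integral {t - \<tau>..t} (\<lambda>s. G_fun N v dv \<beta> \<tau> (s - \<tau>))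
        - (real N - 1) * weight_min t * G_fun N v dv \<beta> \<tau> t
        + \<beta> * (1 - exp (- 2 * \<tau>)) * G_fun N v dv \<beta> \<tau> (t - \<tau>)"
proof -
  obtain D where D: "(d_v N v has_real_derivative D) (at t)"
    using d_v_diff by (rule real_differentiableE)
  note G_deriv = G_fun_has_derivative[OF t D, of \<beta>]
  show ?thesis
    using G_deriv DERIV_imp_deriv[OF G_deriv] G_fun_derivative_le[OF beta_pos beta_cond t D]
    unfolding real_differentiable_def by auto
qed

end

theorem lemma4p1:
  fixes N :: nat and \<sigma> \<tau> \<beta> :: real and \<psi> :: "real \<Rightarrow> real"
    and x v dv :: "nat \<Rightarrow> real \<Rightarrow> 'a::euclidean_space"
  assumes N2: "N \<ge> 2"
    and delays: "0 \<le> \<sigma>" "\<sigma> \<le> \<tau>"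
    and psi_cont: "continuous_on {0..} \<psi>"
    and psi_mono: "\<And>r s. 0 \<le> r \<Longrightarrow> r \<le> s \<Longrightarrow> \<psi> s \<le> \<psi> r"
    and psi_pos: "\<And>r. 0 \<le> r \<Longrightarrow> \<psi> r > 0"
    and psi_le1: "\<And>r. 0 \<le> r \<Longrightarrow> \<psi> r \<le> 1"
    and x_deriv: "\<And>i t. i \<in> {1..N} \<Longrightarrow> t \<ge> - \<tau> \<Longrightarrow>
        (x i has_vector_derivative v i t) (at t within {- \<tau>..})"
    and v_cont: "\<And>i. i \<in> {1..N} \<Longrightarrow> continuous_on {- \<tau>..} (v i)"
    and v_deriv: "\<And>i t. i \<in> {1..N} \<Longrightarrow> t \<ge> 0 \<Longrightarrow>
        (v i has_vector_derivative dv i t) (at t within {0..})"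
    and dv_cont: "\<And>i. i \<in> {1..N} \<Longrightarrow> continuous_on {0..} (dv i)"
    and ode: "\<And>i t. i \<in> {1..N} \<Longrightarrow> t > 0 \<Longrightarrow>
        dv i t = (\<Sum>j\<in>{1..N} - {i}. cs_a \<psi> N x \<sigma> \<tau> i j t *\<^sub>R (v j (t - \<tau>) - v i (t - \<sigma>)))"
    and beta_pos: "\<beta> > 0"
    and beta_cond: "2 * \<beta> * exp (- 2 * \<tau>) - 4 * \<tau> - \<beta> \<ge> 0"
  shows "AE t in lborel. t > 2 * \<tau> \<longrightarrow>
           (G_fun N v dv \<beta> \<tau> differentiable (at t) \<and>
            deriv (G_fun N v dv \<beta> \<tau>) t
              \<le> 4 * integral {t - \<tau>..t} (\<lambda>s. G_fun N v dv \<beta> \<tau> (s - \<tau>))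
                 - (real N - 1) * a_min \<psi> N x \<sigma> \<tau> t * G_fun N v dv \<beta> \<tau> t
                 + \<beta> * (1 - exp (- 2 * \<tau>)) * G_fun N v dv \<beta> \<tau> (t - \<tau>))"
proof -
  interpret delayed_cs N \<sigma> \<tau> \<psi> x v dv
    using N2 delays psi_pos psi_le1 v_cont v_deriv dv_cont ode by unfold_locales auto
  obtain C where C: "countable C" "\<And>t. 0 < t \<Longrightarrow> t \<notin> C \<Longrightarrow> d_v N v differentiable (at t)"
    using d_v_differentiable_off_countable by blast
  have "AE t in lborel. t \<notin> C"
    by (rule AE_not_in[OF countable_imp_null_set_lborel[OF C(1)]])
  then show ?thesis
  proof (rule eventually_mono, intro impI deriv_G_fun_le[OF beta_pos beta_cond])
    fix t assume "t \<notin> C" "2 * \<tau> < t"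
    then show "d_v N v differentiable (at t)"
      using C(2) tau_nonneg by simp
  qed
qed

end
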